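(* Let $X=\bigcup_{\alpha\in\Lambda}X_\alpha$, where each $X_\alpha$ is a closed locally Menger subspace of $X$ and the family $\{X_\alpha:\alpha\in\Lambda\}$ is locally finite in $X$. Then $X$ is locally Menger.
   Context: A space $X$ is Menger if for each sequence $(\mathcal{U}_n)$ of open covers of $X$ there is a sequence $(\mathcal{V}_n)$ with each $\mathcal{V}_n$ a finite subset of $\mathcal{U}_n$ and $\bigcup_{n}\bigcup\mathcal{V}_n=X$. A space $X$ is locally Menger if for each $x\in X$ there exist an open set $U$ and a Menger subspace $Y$ of $X$ with $x\in U\subseteq Y$. *)

theory Defs
  imports "HOL-Analysis.Analysis"
begin

definition Menger_space :: "'a topology \<Rightarrow> bool" where
  "Menger_space X \<longleftrightarrow>
     (\<forall>\<U> :: nat \<Rightarrow> 'a set set.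
        (\<forall>n. (\<forall>U \<in> \<U> n. openin X U) \<and> topspace X \<subseteq> \<Union>(\<U> n)) \<longrightarrow>
        (\<exists>\<V> :: nat \<Rightarrow> 'a set set.
           (\<forall>n. finite (\<V> n) \<and> \<V> n \<subseteq> \<U> n) \<and>
           topspace X \<subseteq> (\<Union>n. \<Union>(\<V> n))))"

definition locally_Menger :: "'a topology \<Rightarrow> bool" where
  "locally_Menger X \<longleftrightarrow>
     (\<forall>x \<in> topspace X. \<exists>U Y. openin X U \<and> x \<in> U \<and> U \<subseteq> Y \<and>
        Y \<subseteq> topspace X \<and> Menger_space (subtopology X Y))"

end

theory Submission
  imports Defs
begin

(* A subspace is Menger iff every sequence of covers of it by open sets of the ambient space
  admits finite selections covering it; in this form Menger subspaces are visibly closed under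
  finite unions. Given x, a neighbourhood meeting only finitely many X_\<alpha> can be shrunk, by
  removing the finitely many closed X_\<alpha> that miss x, to one that meets only the X_\<alpha> containing x.
  Intersecting it with neighbourhoods of x witnessing local Mengerness of these finitely many X_\<alpha>
  yields an open set inside a finite union of Menger subspaces. *)

lemma Menger_space_empty: "topspace X = {} \<Longrightarrow> Menger_space X"
  unfolding Menger_space_def by (intro allI impI exI[of _ "\<lambda>n. {}"]) auto

lemma Menger_space_subtopologyD:
  fixes X :: "'a topology" and \<U> :: "nat \<Rightarrow> 'a set set"
  assumes "Menger_space (subtopology X A)"
    and open_\<U>: "\<And>n. \<forall>U \<in> \<U> n. openin X U" and cover_\<U>: "\<And>n. topspace X \<inter> A \<subseteq> \<Union>(\<U> n)"
  obtains \<V> where "\<And>n. finite (\<V> n)" "\<And>n. \<V> n \<subseteq> \<U> n" "topspace X \<inter> A \<subseteq> (\<Union>n. \<Union>(\<V> n))"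
proof -
  define \<U>A where "\<U>A n = (\<lambda>U. U \<inter> A) ` \<U> n" for n
  have "\<forall>n. (\<forall>U \<in> \<U>A n. openin (subtopology X A) U) \<and> topspace (subtopology X A) \<subseteq> \<Union>(\<U>A n)"
  proof
    fix n
    have "\<forall>U \<in> \<U>A n. openin (subtopology X A) U"
      using open_\<U> by (auto simp: \<U>A_def openin_subtopology_Int)
    moreover have "topspace (subtopology X A) \<subseteq> \<Union>(\<U>A n)"
      using cover_\<U>[of n] unfolding \<U>A_def by fastforce
    ultimately show "(\<forall>U \<in> \<U>A n. openin (subtopology X A) U) \<and> topspace (subtopology X A) \<subseteq> \<Union>(\<U>A n)" ..
  qed
  from assms(1)[unfolded Menger_space_def, THEN spec, THEN mp, OF this]
  obtain \<V> where \<V>: "\<And>n. finite (\<V> n) \<and> \<V> n \<subseteq> \<U>A n"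
    and cov: "topspace (subtopology X A) \<subseteq> (\<Union>n. \<Union>(\<V> n))"
    by blast
  have "\<forall>n. \<exists>\<W>. \<W> \<subseteq> \<U> n \<and> finite \<W> \<and> \<V> n = (\<lambda>U. U \<inter> A) ` \<W>"
    using \<V> unfolding \<U>A_def by (meson finite_subset_image)
  then obtain \<W> where \<W>: "\<And>n. \<W> n \<subseteq> \<U> n \<and> finite (\<W> n) \<and> \<V> n = (\<lambda>U. U \<inter> A) ` \<W> n"
    by metis
  have "topspace X \<inter> A \<subseteq> (\<Union>n. \<Union>(\<W> n))"
  proof
    fix y assume "y \<in> topspace X \<inter> A"
    with cov obtain n V where "V \<in> \<V> n" "y \<in> V"
      by auto
    with \<W>[of n] show "y \<in> (\<Union>n. \<Union>(\<W> n))"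
      by blast
  qed
  with \<W> show thesis
    using that[of \<W>] by blast
qed

lemma Menger_space_subtopologyI:
  fixes X :: "'a topology"
  assumes "\<And>\<U> :: nat \<Rightarrow> 'a set set. (\<And>n. \<forall>U \<in> \<U> n. openin X U) \<Longrightarrow> (\<And>n. topspace X \<inter> A \<subseteq> \<Union>(\<U> n)) \<Longrightarrow>
      \<exists>\<V>. (\<forall>n. finite (\<V> n) \<and> \<V> n \<subseteq> \<U> n) \<and> topspace X \<inter> A \<subseteq> (\<Union>n. \<Union>(\<V> n))"
  shows "Menger_space (subtopology X A)"
  unfolding Menger_space_def
proof (intro allI impI)
  fix \<U> :: "nat \<Rightarrow> 'a set set"
  assume \<U>: "\<forall>n. (\<forall>U \<in> \<U> n. openin (subtopology X A) U) \<and> topspace (subtopology X A) \<subseteq> \<Union>(\<U> n)"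
  define \<U>X where "\<U>X n = {T. openin X T \<and> T \<inter> A \<in> \<U> n}" for n
  have open_\<U>X: "\<forall>T \<in> \<U>X n. openin X T" for n
    by (simp add: \<U>X_def)
  have cover_\<U>X: "topspace X \<inter> A \<subseteq> \<Union>(\<U>X n)" for n
  proof
    fix y assume "y \<in> topspace X \<inter> A"
    then have "y \<in> topspace (subtopology X A)" by simp
    then obtain U where "U \<in> \<U> n" "y \<in> U" using \<U> by blast
    moreover obtain T where "openin X T" "U = T \<inter> A"
      using \<U> \<open>U \<in> \<U> n\<close> by (meson openin_subtopology)
    ultimately show "y \<in> \<Union>(\<U>X n)" by (auto simp: \<U>X_def)
  qed
  have "\<exists>\<W>. (\<forall>n. finite (\<W> n) \<and> \<W> n \<subseteq> \<U>X n) \<and> topspace X \<inter> A \<subseteq> (\<Union>n. \<Union>(\<W> n))"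
    using open_\<U>X cover_\<U>X by (rule assms)
  then obtain \<W> where \<W>: "\<forall>n. finite (\<W> n) \<and> \<W> n \<subseteq> \<U>X n"
    and cov: "topspace X \<inter> A \<subseteq> (\<Union>n. \<Union>(\<W> n))"
    by blast
  show "\<exists>\<V>. (\<forall>n. finite (\<V> n) \<and> \<V> n \<subseteq> \<U> n) \<and> topspace (subtopology X A) \<subseteq> (\<Union>n. \<Union>(\<V> n))"
  proof (intro exI[of _ "\<lambda>n. (\<lambda>T. T \<inter> A) ` \<W> n"] conjI allI)
    fix n
    show "finite ((\<lambda>T. T \<inter> A) ` \<W> n)" "(\<lambda>T. T \<inter> A) ` \<W> n \<subseteq> \<U> n"
      using \<W> by (auto simp: \<U>X_def)
  next
    show "topspace (subtopology X A) \<subseteq> (\<Union>n. \<Union>((\<lambda>T. T \<inter> A) ` \<W> n))"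
      using cov by auto
  qed
qed

lemma Menger_space_subtopology_Un:
  assumes MA: "Menger_space (subtopology X A)" and MB: "Menger_space (subtopology X B)"
  shows "Menger_space (subtopology X (A \<union> B))"
proof (rule Menger_space_subtopologyI)
  fix \<U> :: "nat \<Rightarrow> 'a set set"
  assume open_\<U>: "\<And>n. \<forall>U \<in> \<U> n. openin X U"
    and cover_\<U>: "\<And>n. topspace X \<inter> (A \<union> B) \<subseteq> \<Union>(\<U> n)"
  have cover_A: "topspace X \<inter> A \<subseteq> \<Union>(\<U> n)" and cover_B: "topspace X \<inter> B \<subseteq> \<Union>(\<U> n)" for n
    using cover_\<U>[of n] by (simp_all add: Int_Un_distrib)
  obtain \<V>A where \<V>A: "\<And>n. finite (\<V>A n)" "\<And>n. \<V>A n \<subseteq> \<U> n"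
    "topspace X \<inter> A \<subseteq> (\<Union>n. \<Union>(\<V>A n))"
    by (rule Menger_space_subtopologyD[OF MA open_\<U> cover_A]) (rule that)
  obtain \<V>B where \<V>B: "\<And>n. finite (\<V>B n)" "\<And>n. \<V>B n \<subseteq> \<U> n"
    "topspace X \<inter> B \<subseteq> (\<Union>n. \<Union>(\<V>B n))"
    by (rule Menger_space_subtopologyD[OF MB open_\<U> cover_B]) (rule that)
  have "topspace X \<inter> (A \<union> B) = (topspace X \<inter> A) \<union> (topspace X \<inter> B)"
    by (rule Int_Un_distrib)
  also have "\<dots> \<subseteq> (\<Union>n. \<Union>(\<V>A n)) \<union> (\<Union>n. \<Union>(\<V>B n))"
    using \<V>A(3) \<V>B(3) by (rule Un_mono)
  also have "\<dots> = (\<Union>n. \<Union>(\<V>A n \<union> \<V>B n))"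
    by auto
  finally have "topspace X \<inter> (A \<union> B) \<subseteq> (\<Union>n. \<Union>(\<V>A n \<union> \<V>B n))" .
  moreover have "\<forall>n. finite (\<V>A n \<union> \<V>B n) \<and> \<V>A n \<union> \<V>B n \<subseteq> \<U> n"
    using \<V>A(1,2) \<V>B(1,2) by simp
  ultimately show "\<exists>\<V>. (\<forall>n. finite (\<V> n) \<and> \<V> n \<subseteq> \<U> n) \<and> topspace X \<inter> (A \<union> B) \<subseteq> (\<Union>n. \<Union>(\<V> n))"
    by (intro exI[of _ "\<lambda>n. \<V>A n \<union> \<V>B n"] conjI)
qed

lemma Menger_space_subtopology_UN:
  assumes "finite I" and "\<And>i. i \<in> I \<Longrightarrow> Menger_space (subtopology X (Y i))"
  shows "Menger_space (subtopology X (\<Union>i\<in>I. Y i))"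
  using assms
proof (induction I rule: finite_induct)
  case empty
  then show ?case by (simp add: Menger_space_empty)
next
  case (insert i I)
  then show ?case by (simp add: Menger_space_subtopology_Un)
qed

lemma locally_Menger_subtopologyD:
  assumes "locally_Menger (subtopology X S)" and "x \<in> topspace X" and "x \<in> S"
  obtains W Y where "openin X W" "x \<in> W" "W \<inter> S \<subseteq> Y" "Y \<subseteq> topspace X \<inter> S"
    "Menger_space (subtopology X Y)"
proof -
  have "x \<in> topspace (subtopology X S)"
    using assms(2,3) by simp
  with assms(1) have "\<exists>U Y. openin (subtopology X S) U \<and> x \<in> U \<and> U \<subseteq> Y \<and>
      Y \<subseteq> topspace (subtopology X S) \<and> Menger_space (subtopology (subtopology X S) Y)"
    unfolding locally_Menger_def by (rule bspec)
  then obtain U Y where U: "openin (subtopology X S) U" "x \<in> U" "U \<subseteq> Y"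
    and Y: "Y \<subseteq> topspace (subtopology X S)" "Menger_space (subtopology (subtopology X S) Y)"
    by blast
  obtain W where W: "openin X W" "U = W \<inter> S"
    using U(1) by (meson openin_subtopology)
  have "Y \<subseteq> topspace X \<inter> S"
    using Y(1) by simp
  then have "S \<inter> Y = Y"
    by blast
  then have "subtopology (subtopology X S) Y = subtopology X Y"
    by (simp add: subtopology_subtopology)
  with Y(2) have "Menger_space (subtopology X Y)"
    by simp
  moreover have "x \<in> W" "W \<inter> S \<subseteq> Y"
    using U(2,3) W(2) by auto
  ultimately show thesis
    using that W(1) \<open>Y \<subseteq> topspace X \<inter> S\<close> by simp
qed

lemma locally_finite_closed_family_nbhd:
  assumes closed: "\<And>\<alpha>. \<alpha> \<in> \<Lambda> \<Longrightarrow> closedin X (Xs \<alpha>)"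
    and locfin: "openin X V" "x \<in> V" "finite {\<alpha> \<in> \<Lambda>. Xs \<alpha> \<inter> V \<noteq> {}}"
  obtains W where "openin X W" "x \<in> W" "finite {\<alpha> \<in> \<Lambda>. x \<in> Xs \<alpha>}"
    "\<And>\<alpha>. \<alpha> \<in> \<Lambda> \<Longrightarrow> Xs \<alpha> \<inter> W \<noteq> {} \<Longrightarrow> x \<in> Xs \<alpha>"
proof -
  define F where "F = {\<alpha> \<in> \<Lambda>. Xs \<alpha> \<inter> V \<noteq> {} \<and> x \<notin> Xs \<alpha>}"
  define W where "W = V - \<Union>(Xs ` F)"
  have "finite F"
    using locfin(3) by (rule finite_subset[rotated]) (auto simp: F_def)
  then have "closedin X (\<Union>(Xs ` F))"
    using closed by (intro closedin_Union) (auto simp: F_def)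
  then have "openin X W"
    unfolding W_def using locfin(1) by (rule openin_diff[rotated])
  moreover have "x \<in> W"
    using locfin(2) by (auto simp: W_def F_def)
  moreover have "finite {\<alpha> \<in> \<Lambda>. x \<in> Xs \<alpha>}"
    using locfin(3) by (rule finite_subset[rotated]) (use locfin(2) in blast)
  moreover have "x \<in> Xs \<alpha>" if "\<alpha> \<in> \<Lambda>" "Xs \<alpha> \<inter> W \<noteq> {}" for \<alpha>
  proof (rule ccontr)
    assume "x \<notin> Xs \<alpha>"
    with that have "\<alpha> \<in> F"
      by (auto simp: F_def W_def)
    with that(2) show False
      by (auto simp: W_def)
  qed
  ultimately show thesis
    using that by blast
qed

lemma Menger_nbhd_of_finite_locally_Menger_cover:
  assumes "openin X V" "x \<in> V" "finite I" "V \<subseteq> (\<Union>\<alpha>\<in>I. S \<alpha>)"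
    and "\<And>\<alpha>. \<alpha> \<in> I \<Longrightarrow> x \<in> S \<alpha>"
    and "\<And>\<alpha>. \<alpha> \<in> I \<Longrightarrow> locally_Menger (subtopology X (S \<alpha>))"
  shows "\<exists>U Y. openin X U \<and> x \<in> U \<and> U \<subseteq> Y \<and> Y \<subseteq> topspace X \<and> Menger_space (subtopology X Y)"
proof -
  have "\<forall>\<alpha>\<in>I. \<exists>W Y. openin X W \<and> x \<in> W \<and> W \<inter> S \<alpha> \<subseteq> Y \<and> Y \<subseteq> topspace X \<inter> S \<alpha> \<and>
      Menger_space (subtopology X Y)"
  proof
    fix \<alpha> assume "\<alpha> \<in> I"
    moreover have "x \<in> topspace X"
      using assms(1,2) openin_subset by blast
    ultimately show "\<exists>W Y. openin X W \<and> x \<in> W \<and> W \<inter> S \<alpha> \<subseteq> Y \<and> Y \<subseteq> topspace X \<inter> S \<alpha> \<and>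
        Menger_space (subtopology X Y)"
      by (metis assms(5,6) locally_Menger_subtopologyD)
  qed
  from bchoice[OF this] obtain W where "\<forall>\<alpha>\<in>I. \<exists>Y. openin X (W \<alpha>) \<and> x \<in> W \<alpha> \<and>
      W \<alpha> \<inter> S \<alpha> \<subseteq> Y \<and> Y \<subseteq> topspace X \<inter> S \<alpha> \<and> Menger_space (subtopology X Y)" ..
  from bchoice[OF this] obtain Y where WY: "\<forall>\<alpha>\<in>I. openin X (W \<alpha>) \<and> x \<in> W \<alpha> \<and>
      W \<alpha> \<inter> S \<alpha> \<subseteq> Y \<alpha> \<and> Y \<alpha> \<subseteq> topspace X \<inter> S \<alpha> \<and> Menger_space (subtopology X (Y \<alpha>))" ..
  define U where "U = V \<inter> ((\<Inter>\<alpha>\<in>I. W \<alpha>) \<inter> topspace X)"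
  have "openin X U"
    unfolding U_def using assms(1,3) WY by (intro openin_Int openin_INT) simp_all
  moreover have "x \<in> U"
    using assms(1,2) WY openin_subset by (fastforce simp: U_def)
  moreover have "U \<subseteq> (\<Union>\<alpha>\<in>I. Y \<alpha>)"
  proof
    fix y assume y: "y \<in> U"
    then obtain \<beta> where "\<beta> \<in> I" "y \<in> S \<beta>"
      using assms(4) by (auto simp: U_def)
    moreover from y \<open>\<beta> \<in> I\<close> have "y \<in> W \<beta>"
      by (simp add: U_def)
    ultimately have "y \<in> Y \<beta>"
      using WY by blast
    with \<open>\<beta> \<in> I\<close> show "y \<in> (\<Union>\<alpha>\<in>I. Y \<alpha>)"
      by blast
  qed
  moreover have "(\<Union>\<alpha>\<in>I. Y \<alpha>) \<subseteq> topspace X"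
    using WY by blast
  moreover have "Menger_space (subtopology X (\<Union>\<alpha>\<in>I. Y \<alpha>))"
    using assms(3) WY by (intro Menger_space_subtopology_UN) simp_all
  ultimately show ?thesis
    by blast
qed

theorem theorem4p5:
  fixes X :: "'a topology" and Xs :: "'i \<Rightarrow> 'a set" and \<Lambda> :: "'i set"
  assumes cover: "topspace X = (\<Union>\<alpha>\<in>\<Lambda>. Xs \<alpha>)"
    and closed: "\<And>\<alpha>. \<alpha> \<in> \<Lambda> \<Longrightarrow> closedin X (Xs \<alpha>)"
    and locM: "\<And>\<alpha>. \<alpha> \<in> \<Lambda> \<Longrightarrow> locally_Menger (subtopology X (Xs \<alpha>))"
    and locfin: "\<And>x. x \<in> topspace X \<Longrightarrow>
       \<exists>V. openin X V \<and> x \<in> V \<and> finite {\<alpha> \<in> \<Lambda>. Xs \<alpha> \<inter> V \<noteq> {}}"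
  shows "locally_Menger X"
  unfolding locally_Menger_def
proof
  fix x assume x: "x \<in> topspace X"
  then obtain V0 where V0: "openin X V0" "x \<in> V0" "finite {\<alpha> \<in> \<Lambda>. Xs \<alpha> \<inter> V0 \<noteq> {}}"
    using locfin by blast
  obtain V where V: "openin X V" "x \<in> V" "finite {\<alpha> \<in> \<Lambda>. x \<in> Xs \<alpha>}"
    and meets: "\<And>\<alpha>. \<alpha> \<in> \<Lambda> \<Longrightarrow> Xs \<alpha> \<inter> V \<noteq> {} \<Longrightarrow> x \<in> Xs \<alpha>"
    using locally_finite_closed_family_nbhd[OF closed V0] by blast
  define I where "I = {\<alpha> \<in> \<Lambda>. x \<in> Xs \<alpha>}"
  have "V \<subseteq> (\<Union>\<alpha>\<in>I. Xs \<alpha>)"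
  proof
    fix y assume "y \<in> V"
    moreover from this V(1) obtain \<beta> where "\<beta> \<in> \<Lambda>" "y \<in> Xs \<beta>"
      using cover openin_subset by blast
    ultimately show "y \<in> (\<Union>\<alpha>\<in>I. Xs \<alpha>)"
      using meets unfolding I_def by blast
  qed
  with V show "\<exists>U Y. openin X U \<and> x \<in> U \<and> U \<subseteq> Y \<and> Y \<subseteq> topspace X \<and> Menger_space (subtopology X Y)"
    by (intro Menger_nbhd_of_finite_locally_Menger_cover[of X V x I Xs]) (auto simp: I_def locM)
qed

end
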